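(* Let $S$ be a $\Gamma$-hemiring and let $\mu$ be a fuzzy h-ideal of $S$. Then for every $x\in S$, $\langle x,\mu^{+}\rangle$ is a fuzzy h-ideal of $S$, where $\mu^{+}(y)=\mu(y)-\mu(0)+1$ for $y\in S$.
   Context: A $\Gamma$-hemiring is a pair of additive commutative semigroups with zero $S$ and $\Gamma$ with a map $S\times\Gamma\times S\to S$, $(a,\alpha,b)\mapsto a\alpha b$, such that for all $a,b,c\in S$, $\alpha,\beta\in\Gamma$: $(a+b)\alpha c=a\alpha c+b\alpha c$; $a\alpha(b+c)=a\alpha b+a\alpha c$; $a(\alpha+\beta)b=a\alpha b+a\beta b$; $a\alpha(b\beta c)=(a\alpha b)\beta c$; $0\alpha a=0=a\alpha0$; $a0b=0=b0a$. A fuzzy h-ideal of $S$ is a map $\mu:S\to[0,1]$, not identically $0$, such that for all $x,y,a,b,z\in S$, $\gamma\in\Gamma$: $\mu(x+y)\ge\min\{\mu(x),\mu(y)\}$; $\mu(x\gamma y)\ge\mu(x)$ and $\mu(x\gamma y)\ge\mu(y)$; $x+a+z=b+z$ implies $\mu(x)\ge\min\{\mu(a),\mu(b)\}$. The extension of a fuzzy subset $\mu$ by $x$ is $\langle x,\mu\rangle(y)=\inf_{s\in S,\ \alpha,\gamma\in\Gamma}\mu(x\alpha s\gamma y)$. *)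

theory Defs
  imports Complex_Main
begin

definition comm_sgz :: "'a set \<Rightarrow> ('a \<Rightarrow> 'a \<Rightarrow> 'a) \<Rightarrow> 'a \<Rightarrow> bool" where
  "comm_sgz A add z \<longleftrightarrow> z \<in> A \<and>
     (\<forall>a\<in>A. \<forall>b\<in>A. add a b \<in> A) \<and>
     (\<forall>a\<in>A. \<forall>b\<in>A. \<forall>c\<in>A. add (add a b) c = add a (add b c)) \<and>
     (\<forall>a\<in>A. \<forall>b\<in>A. add a b = add b a) \<and>
     (\<forall>a\<in>A. add z a = a)"

definition gamma_hemiring ::
  "'a set \<Rightarrow> ('a \<Rightarrow> 'a \<Rightarrow> 'a) \<Rightarrow> 'a \<Rightarrow> 'b set \<Rightarrow> ('b \<Rightarrow> 'b \<Rightarrow> 'b) \<Rightarrow> 'b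
     \<Rightarrow> ('a \<Rightarrow> 'b \<Rightarrow> 'a \<Rightarrow> 'a) \<Rightarrow> bool" where
  "gamma_hemiring S addS zS G addG zG m \<longleftrightarrow>
     comm_sgz S addS zS \<and> comm_sgz G addG zG \<and>
     (\<forall>a\<in>S. \<forall>\<alpha>\<in>G. \<forall>b\<in>S. m a \<alpha> b \<in> S) \<and>
     (\<forall>a\<in>S. \<forall>b\<in>S. \<forall>c\<in>S. \<forall>\<alpha>\<in>G.
        m (addS a b) \<alpha> c = addS (m a \<alpha> c) (m b \<alpha> c) \<and>
        m a \<alpha> (addS b c) = addS (m a \<alpha> b) (m a \<alpha> c)) \<and>
     (\<forall>a\<in>S. \<forall>b\<in>S. \<forall>\<alpha>\<in>G. \<forall>\<beta>\<in>G. m a (addG \<alpha> \<beta>) b = addS (m a \<alpha> b) (m a \<beta> b)) \<and>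
     (\<forall>a\<in>S. \<forall>b\<in>S. \<forall>c\<in>S. \<forall>\<alpha>\<in>G. \<forall>\<beta>\<in>G. m a \<alpha> (m b \<beta> c) = m (m a \<alpha> b) \<beta> c) \<and>
     (\<forall>a\<in>S. \<forall>\<alpha>\<in>G. m zS \<alpha> a = zS \<and> m a \<alpha> zS = zS) \<and>
     (\<forall>a\<in>S. \<forall>b\<in>S. m a zG b = zS \<and> m b zG a = zS)"

definition fuzzy_h_ideal ::
  "'a set \<Rightarrow> ('a \<Rightarrow> 'a \<Rightarrow> 'a) \<Rightarrow> 'b set \<Rightarrow> ('a \<Rightarrow> 'b \<Rightarrow> 'a \<Rightarrow> 'a) \<Rightarrow> ('a \<Rightarrow> real) \<Rightarrow> bool" where
  "fuzzy_h_ideal S addS G m \<mu> \<longleftrightarrow>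
     (\<forall>x\<in>S. 0 \<le> \<mu> x \<and> \<mu> x \<le> 1) \<and> (\<exists>x\<in>S. \<mu> x \<noteq> 0) \<and>
     (\<forall>x\<in>S. \<forall>y\<in>S. \<mu> (addS x y) \<ge> min (\<mu> x) (\<mu> y)) \<and>
     (\<forall>x\<in>S. \<forall>y\<in>S. \<forall>\<gamma>\<in>G. \<mu> (m x \<gamma> y) \<ge> \<mu> x \<and> \<mu> (m x \<gamma> y) \<ge> \<mu> y) \<and>
     (\<forall>x\<in>S. \<forall>a\<in>S. \<forall>b\<in>S. \<forall>z\<in>S. addS (addS x a) z = addS b z \<longrightarrow>
        \<mu> x \<ge> min (\<mu> a) (\<mu> b))"

definition extension ::
  "'a set \<Rightarrow> 'b set \<Rightarrow> ('a \<Rightarrow> 'b \<Rightarrow> 'a \<Rightarrow> 'a) \<Rightarrow> 'a \<Rightarrow> ('a \<Rightarrow> real) \<Rightarrow> 'a \<Rightarrow> real" where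
  "extension S G m x \<mu> y = (INF p \<in> S \<times> G \<times> G. \<mu> (m (m x (fst (snd p)) (fst p)) (snd (snd p)) y))"

definition mu_plus :: "'a \<Rightarrow> ('a \<Rightarrow> real) \<Rightarrow> 'a \<Rightarrow> real" where
  "mu_plus zS \<mu> y = \<mu> y - \<mu> zS + 1"

end

theory Submission
  imports Defs
begin

text \<open>Every fuzzy h-ideal attains its maximum at 0, because y \<gamma> 0 = 0; hence the shift
  \<mu> - \<mu>(0) + 1 is again a fuzzy h-ideal, the defining conditions being invariant under adding a
  constant. The extension \<langle>x,\<nu>\<rangle> of any fuzzy h-ideal \<nu> is a fuzzy h-ideal: each condition holds
  for every term \<nu>(x \<alpha> s \<gamma> y) of the infimum by distributivity and associativity of the product,
  for the right multiple s \<gamma> (a \<beta> b) the factor a is absorbed into the index s, and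
  \<langle>x,\<nu>\<rangle>(0) = \<nu>(0) > 0.\<close>

context
  fixes S :: "'a set" and addS zS and G :: "'b set" and addG zG
    and m :: "'a \<Rightarrow> 'b \<Rightarrow> 'a \<Rightarrow> 'a"
  assumes hemiring: "gamma_hemiring S addS zS G addG zG m"
begin

lemma gamma_hemiring_zeros: "zS \<in> S" "zG \<in> G"
  using hemiring by (auto simp: gamma_hemiring_def comm_sgz_def)

lemma gamma_hemiring_add_closed: "a \<in> S \<Longrightarrow> b \<in> S \<Longrightarrow> addS a b \<in> S"
  using hemiring by (auto simp: gamma_hemiring_def comm_sgz_def)

lemma gamma_hemiring_mult_closed: "a \<in> S \<Longrightarrow> \<alpha> \<in> G \<Longrightarrow> b \<in> S \<Longrightarrow> m a \<alpha> b \<in> S"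
  using hemiring by (auto simp: gamma_hemiring_def)

lemma gamma_hemiring_mult_add_distrib:
  "a \<in> S \<Longrightarrow> \<alpha> \<in> G \<Longrightarrow> b \<in> S \<Longrightarrow> c \<in> S \<Longrightarrow> m a \<alpha> (addS b c) = addS (m a \<alpha> b) (m a \<alpha> c)"
  using hemiring by (auto simp: gamma_hemiring_def)

lemma gamma_hemiring_mult_assoc:
  "a \<in> S \<Longrightarrow> \<alpha> \<in> G \<Longrightarrow> b \<in> S \<Longrightarrow> \<beta> \<in> G \<Longrightarrow> c \<in> S \<Longrightarrow> m a \<alpha> (m b \<beta> c) = m (m a \<alpha> b) \<beta> c"
  using hemiring by (auto simp: gamma_hemiring_def)

lemma gamma_hemiring_mult_zero_right: "a \<in> S \<Longrightarrow> \<alpha> \<in> G \<Longrightarrow> m a \<alpha> zS = zS"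
  using hemiring by (auto simp: gamma_hemiring_def)

lemma fuzzy_h_ideal_le_zero:
  assumes "fuzzy_h_ideal S addS G m \<mu>" and "y \<in> S"
  shows "\<mu> y \<le> \<mu> zS"
  using assms gamma_hemiring_zeros gamma_hemiring_mult_zero_right[OF \<open>y \<in> S\<close> gamma_hemiring_zeros(2)]
  unfolding fuzzy_h_ideal_def by metis

lemma fuzzy_h_ideal_zero_pos:
  assumes "fuzzy_h_ideal S addS G m \<mu>"
  shows "0 < \<mu> zS"
proof -
  obtain y where "y \<in> S" "\<mu> y \<noteq> 0" "0 \<le> \<mu> y"
    using assms unfolding fuzzy_h_ideal_def by blast
  then show ?thesis
    using fuzzy_h_ideal_le_zero[OF assms \<open>y \<in> S\<close>] by linarith
qed

lemma fuzzy_h_ideal_mu_plus: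
  assumes ideal: "fuzzy_h_ideal S addS G m \<mu>"
  shows "fuzzy_h_ideal S addS G m (mu_plus zS \<mu>)"
proof -
  note \<mu> = ideal[unfolded fuzzy_h_ideal_def]
  have shift_min: "min (mu_plus zS \<mu> a) (mu_plus zS \<mu> b) = min (\<mu> a) (\<mu> b) - \<mu> zS + 1" for a b
    by (simp add: mu_plus_def min_def)
  show ?thesis
    unfolding fuzzy_h_ideal_def shift_min
  proof (intro conjI ballI impI)
    fix y assume "y \<in> S"
    then have "0 \<le> \<mu> y" "\<mu> y \<le> \<mu> zS" "\<mu> zS \<le> 1"
      using \<mu> fuzzy_h_ideal_le_zero[OF ideal] gamma_hemiring_zeros(1) by auto
    then show "0 \<le> mu_plus zS \<mu> y" "mu_plus zS \<mu> y \<le> 1"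
      unfolding mu_plus_def by simp_all
  next
    show "\<exists>y\<in>S. mu_plus zS \<mu> y \<noteq> 0"
      using gamma_hemiring_zeros(1) by (intro bexI[of _ zS]) (simp_all add: mu_plus_def)
  next
    fix a b assume "a \<in> S" "b \<in> S"
    then show "min (\<mu> a) (\<mu> b) - \<mu> zS + 1 \<le> mu_plus zS \<mu> (addS a b)"
      using \<mu> unfolding mu_plus_def by simp
  next
    fix a b \<gamma> assume "a \<in> S" "b \<in> S" "\<gamma> \<in> G"
    then show "mu_plus zS \<mu> a \<le> mu_plus zS \<mu> (m a \<gamma> b)" "mu_plus zS \<mu> b \<le> mu_plus zS \<mu> (m a \<gamma> b)"
      using \<mu> unfolding mu_plus_def by simp_all
  next
    fix y a b z assume "y \<in> S" "a \<in> S" "b \<in> S" "z \<in> S" "addS (addS y a) z = addS b z"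
    then show "min (\<mu> a) (\<mu> b) - \<mu> zS + 1 \<le> mu_plus zS \<mu> y"
      using \<mu> unfolding mu_plus_def by (simp del: min_le_iff_disj) blast
  qed
qed

lemma extension_le:
  assumes nonneg: "\<And>z. z \<in> S \<Longrightarrow> 0 \<le> \<nu> z"
    and "x \<in> S" "s \<in> S" "\<alpha> \<in> G" "\<gamma> \<in> G" "y \<in> S"
  shows "extension S G m x \<nu> y \<le> \<nu> (m (m x \<alpha> s) \<gamma> y)"
  unfolding extension_def
proof (rule cINF_lower2[where x = "(s, \<alpha>, \<gamma>)"])
  have "0 \<le> \<nu> (m (m x \<alpha>' s') \<gamma>' y)" if "(s', \<alpha>', \<gamma>') \<in> S \<times> G \<times> G" for s' \<alpha>' \<gamma>'
    using that assms by (simp add: nonneg gamma_hemiring_mult_closed)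
  then show "bdd_below ((\<lambda>p. \<nu> (m (m x (fst (snd p)) (fst p)) (snd (snd p)) y)) ` (S \<times> G \<times> G))"
    by (intro bdd_belowI2[where m = 0]) auto
qed (use assms in simp_all)

lemma extension_greatest:
  assumes "\<And>s \<alpha> \<gamma>. s \<in> S \<Longrightarrow> \<alpha> \<in> G \<Longrightarrow> \<gamma> \<in> G \<Longrightarrow> c \<le> \<nu> (m (m x \<alpha> s) \<gamma> y)"
  shows "c \<le> extension S G m x \<nu> y"
  unfolding extension_def
  using gamma_hemiring_zeros by (intro cINF_greatest) (auto intro: assms)

context
  fixes \<nu> :: "'a \<Rightarrow> real" and x :: 'a
  assumes ideal: "fuzzy_h_ideal S addS G m \<nu>" and x: "x \<in> S"
begin

private lemma nonneg: "z \<in> S \<Longrightarrow> 0 \<le> \<nu> z"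
  using ideal by (simp add: fuzzy_h_ideal_def)

private lemma extension_le_term:
  "s \<in> S \<Longrightarrow> \<alpha> \<in> G \<Longrightarrow> \<gamma> \<in> G \<Longrightarrow> y \<in> S \<Longrightarrow>
    extension S G m x \<nu> y \<le> \<nu> (m (m x \<alpha> s) \<gamma> y)"
  using extension_le[of \<nu> x s \<alpha> \<gamma> y] nonneg x by blast

private lemma multiplier_closed: "\<alpha> \<in> G \<Longrightarrow> s \<in> S \<Longrightarrow> m x \<alpha> s \<in> S"
  using gamma_hemiring_mult_closed x by blast

lemma extension_bounds:
  assumes "y \<in> S"
  shows "0 \<le> extension S G m x \<nu> y \<and> extension S G m x \<nu> y \<le> 1"
proof
  show "0 \<le> extension S G m x \<nu> y"
    using extension_greatest nonneg gamma_hemiring_mult_closed multiplier_closed assms by metis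
  have "\<nu> (m (m x zG zS) zG y) \<le> 1"
    using ideal gamma_hemiring_mult_closed multiplier_closed gamma_hemiring_zeros assms unfolding fuzzy_h_ideal_def by metis
  then show "extension S G m x \<nu> y \<le> 1"
    using extension_le_term[OF gamma_hemiring_zeros(1,2,2) assms] by linarith
qed

lemma extension_zero: "extension S G m x \<nu> zS = \<nu> zS"
proof (rule antisym)
  show "extension S G m x \<nu> zS \<le> \<nu> zS"
    using extension_le_term[OF gamma_hemiring_zeros(1,2,2,1)]
    by (simp add: gamma_hemiring_mult_zero_right multiplier_closed gamma_hemiring_zeros)
  show "\<nu> zS \<le> extension S G m x \<nu> zS"
    by (rule extension_greatest) (simp add: gamma_hemiring_mult_zero_right multiplier_closed)
qed

lemma extension_add:
  assumes "a \<in> S" "b \<in> S"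
  shows "min (extension S G m x \<nu> a) (extension S G m x \<nu> b) \<le> extension S G m x \<nu> (addS a b)"
proof (rule extension_greatest)
  fix s \<alpha> \<gamma> assume s: "s \<in> S" and \<alpha>: "\<alpha> \<in> G" and \<gamma>: "\<gamma> \<in> G"
  let ?w = "m x \<alpha> s"
  have "m ?w \<gamma> (addS a b) = addS (m ?w \<gamma> a) (m ?w \<gamma> b)"
    using gamma_hemiring_mult_add_distrib multiplier_closed \<alpha> s \<gamma> assms by blast
  then have "min (\<nu> (m ?w \<gamma> a)) (\<nu> (m ?w \<gamma> b)) \<le> \<nu> (m ?w \<gamma> (addS a b))"
    using ideal gamma_hemiring_mult_closed multiplier_closed \<alpha> s \<gamma> assms unfolding fuzzy_h_ideal_def by metis
  then show "min (extension S G m x \<nu> a) (extension S G m x \<nu> b) \<le> \<nu> (m ?w \<gamma> (addS a b))"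
    using min.mono[OF extension_le_term[OF s \<alpha> \<gamma> \<open>a \<in> S\<close>] extension_le_term[OF s \<alpha> \<gamma> \<open>b \<in> S\<close>]]
    by linarith
qed

lemma extension_mult_left:
  assumes "a \<in> S" "\<beta> \<in> G" "b \<in> S"
  shows "extension S G m x \<nu> a \<le> extension S G m x \<nu> (m a \<beta> b)"
proof (rule extension_greatest)
  fix s \<alpha> \<gamma> assume s: "s \<in> S" and \<alpha>: "\<alpha> \<in> G" and \<gamma>: "\<gamma> \<in> G"
  let ?w = "m x \<alpha> s"
  have "\<nu> (m ?w \<gamma> a) \<le> \<nu> (m (m ?w \<gamma> a) \<beta> b)"
    using ideal gamma_hemiring_mult_closed multiplier_closed \<alpha> s \<gamma> assms unfolding fuzzy_h_ideal_def by metis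
  also have "m (m ?w \<gamma> a) \<beta> b = m ?w \<gamma> (m a \<beta> b)"
    using gamma_hemiring_mult_assoc multiplier_closed \<alpha> s \<gamma> assms by metis
  finally show "extension S G m x \<nu> a \<le> \<nu> (m ?w \<gamma> (m a \<beta> b))"
    using extension_le_term[OF s \<alpha> \<gamma> \<open>a \<in> S\<close>] by linarith
qed

lemma extension_mult_right:
  assumes "a \<in> S" "\<beta> \<in> G" "b \<in> S"
  shows "extension S G m x \<nu> b \<le> extension S G m x \<nu> (m a \<beta> b)"
proof (rule extension_greatest)
  fix s \<alpha> \<gamma> assume s: "s \<in> S" and \<alpha>: "\<alpha> \<in> G" and \<gamma>: "\<gamma> \<in> G"
  have "m (m x \<alpha> s) \<gamma> (m a \<beta> b) = m (m (m x \<alpha> s) \<gamma> a) \<beta> b"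
    using gamma_hemiring_mult_assoc multiplier_closed \<alpha> s \<gamma> assms by metis
  also have "\<dots> = m (m x \<alpha> (m s \<gamma> a)) \<beta> b"
    using gamma_hemiring_mult_assoc x \<alpha> s \<gamma> assms by metis
  finally show "extension S G m x \<nu> b \<le> \<nu> (m (m x \<alpha> s) \<gamma> (m a \<beta> b))"
    using extension_le_term[OF gamma_hemiring_mult_closed[OF s \<gamma> \<open>a \<in> S\<close>] \<alpha> \<open>\<beta> \<in> G\<close> \<open>b \<in> S\<close>] by simp
qed

lemma extension_h_closed:
  assumes "y \<in> S" "a \<in> S" "b \<in> S" "z \<in> S" and eq: "addS (addS y a) z = addS b z"
  shows "min (extension S G m x \<nu> a) (extension S G m x \<nu> b) \<le> extension S G m x \<nu> y"
proof (rule extension_greatest)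
  fix s \<alpha> \<gamma> assume s: "s \<in> S" and \<alpha>: "\<alpha> \<in> G" and \<gamma>: "\<gamma> \<in> G"
  let ?w = "m x \<alpha> s"
  have w: "?w \<in> S"
    using multiplier_closed \<alpha> s by blast
  have "m ?w \<gamma> (addS (addS y a) z) = m ?w \<gamma> (addS b z)"
    using eq by simp
  then have "addS (addS (m ?w \<gamma> y) (m ?w \<gamma> a)) (m ?w \<gamma> z) = addS (m ?w \<gamma> b) (m ?w \<gamma> z)"
    using gamma_hemiring_mult_add_distrib[OF w \<gamma> gamma_hemiring_add_closed[OF \<open>y \<in> S\<close> \<open>a \<in> S\<close>] \<open>z \<in> S\<close>]
      gamma_hemiring_mult_add_distrib[OF w \<gamma> \<open>y \<in> S\<close> \<open>a \<in> S\<close>] gamma_hemiring_mult_add_distrib[OF w \<gamma> \<open>b \<in> S\<close> \<open>z \<in> S\<close>]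
    by simp
  then have "min (\<nu> (m ?w \<gamma> a)) (\<nu> (m ?w \<gamma> b)) \<le> \<nu> (m ?w \<gamma> y)"
    using ideal gamma_hemiring_mult_closed[OF w \<gamma>] assms unfolding fuzzy_h_ideal_def by blast
  then show "min (extension S G m x \<nu> a) (extension S G m x \<nu> b) \<le> \<nu> (m ?w \<gamma> y)"
    using min.mono[OF extension_le_term[OF s \<alpha> \<gamma> \<open>a \<in> S\<close>] extension_le_term[OF s \<alpha> \<gamma> \<open>b \<in> S\<close>]]
    by linarith
qed

lemma fuzzy_h_ideal_extension: "fuzzy_h_ideal S addS G m (extension S G m x \<nu>)"
  unfolding fuzzy_h_ideal_def
proof (intro conjI ballI impI)
  show "\<exists>y\<in>S. extension S G m x \<nu> y \<noteq> 0"
    using extension_zero fuzzy_h_ideal_zero_pos[OF ideal] gamma_hemiring_zeros(1) by force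
qed (use extension_bounds extension_add extension_mult_left extension_mult_right
      extension_h_closed in auto)

end

end

theorem proposition3p12:
  fixes S :: "'a set" and G :: "'b set"
  assumes "gamma_hemiring S addS zS G addG zG m"
    and "fuzzy_h_ideal S addS G m \<mu>"
    and "x \<in> S"
  shows "fuzzy_h_ideal S addS G m (extension S G m x (mu_plus zS \<mu>))"
  using assms by (intro fuzzy_h_ideal_extension fuzzy_h_ideal_mu_plus)

end
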